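(* Let $q:\mathsf D\to\mathbb R$ have sensitivity $\Delta q\in(0,\infty)$, and let $0\le a<b$. If $\Lambda\sim U(a,b)$ (uniform on $[a,b]$), then the Randomized DP Laplace mechanism with reciprocal scale $\Lambda$ is $$\ln\left[\frac{\alpha^2-\beta^2}{2\big((1+\beta)e^{-\beta}-(1+\alpha)e^{-\alpha}\big)}\right]\text{-differentially private},$$ where $\alpha=a\,\Delta q$ and $\beta=b\,\Delta q$.
   Context: Databases form a set $\mathsf D$ with a symmetric adjacency relation; the sensitivity of $q$ is $\Delta q=\sup\{|q(d)-q(d')|:d,d'\text{ adjacent}\}$. A mechanism $M$ is $\epsilon$-DP if $\mathbb P(M(d)\in S)\le e^\epsilon\mathbb P(M(d')\in S)$ for all adjacent $d,d'$ and Borel $S$. The Randomized DP Laplace mechanism with reciprocal-scale distribution $\Lambda$ (a random variable with values in $[0,\infty)$, positive a.s., playing the role of $1/b$ for the Laplace scale) is defined by $\mathcal M_q(d)=q(d)+W$, where conditionally on $\Lambda=\lambda$ the noise $W$ is Laplace with mean $0$ and scale $1/\lambda$, i.e. has density $\frac{\lambda}{2}e^{-\lambda|w|}$; the pair $(\Lambda,W)$ is drawn independently of $d$. *)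

theory Defs
  imports "HOL-Probability.Probability"
begin

text \<open>Sensitivity of a query q w.r.t. an adjacency relation, as an extended real
  (so that the hypothesis that it lies in (0,\<infinity>) is meaningful).\<close>
definition sensitivity :: "('d \<Rightarrow> 'd \<Rightarrow> bool) \<Rightarrow> ('d \<Rightarrow> real) \<Rightarrow> ereal" where
  "sensitivity adj q = (SUP p \<in> {(d, d'). adj d d'}. ereal \<bar>q (fst p) - q (snd p)\<bar>)"

definition differentially_private ::
    "('d \<Rightarrow> 'd \<Rightarrow> bool) \<Rightarrow> ('d \<Rightarrow> real measure) \<Rightarrow> real \<Rightarrow> bool" where
  "differentially_private adj M \<epsilon> \<longleftrightarrow>
     (\<forall>d d'. adj d d' \<longrightarrow>
        (\<forall>S \<in> sets borel. measure (M d) S \<le> exp \<epsilon> * measure (M d') S))"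

definition laplace_density :: "real \<Rightarrow> real \<Rightarrow> real" where
  "laplace_density l w = l / 2 * exp (- l * \<bar>w\<bar>)"

definition rdp_laplace :: "real measure \<Rightarrow> ('d \<Rightarrow> real) \<Rightarrow> 'd \<Rightarrow> real measure" where
  "rdp_laplace L q d =
     L \<bind> (\<lambda>l. density lborel (\<lambda>y. ennreal (laplace_density l (y - q d))))"

end

theory Submission imports Defs begin

text \<open>Averaging the Laplace density over the reciprocal scale \<open>\<Lambda> \<sim> U(a,b)\<close>, the output
  of the mechanism on \<open>d\<close> has density \<open>G \<bar>y - q d\<bar> / (2(b - a))\<close>, where
  \<open>G t = \<integral>\<^sub>a\<^sup>b \<lambda> e\<^sup>-\<^sup>\<lambda>\<^sup>t d\<lambda>\<close>. The profile \<open>G\<close> is decreasing and satisfies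
  \<open>G D \<cdot> G t \<le> G 0 \<cdot> G (t + D)\<close> (Chebyshev's integral inequality for the two decreasing functions
  \<open>\<lambda> \<mapsto> e\<^sup>-\<^sup>\<lambda>\<^sup>t\<close> and \<open>\<lambda> \<mapsto> e\<^sup>-\<^sup>\<lambda>\<^sup>D\<close> against the weight \<open>\<lambda>\<close> on \<open>[a,b]\<close>). Hence for
  \<open>\<bar>q d - q d'\<bar> \<le> D = \<Delta>q\<close> the ratio of the two output densities is at most
  \<open>G t / G (t + D) \<le> G 0 / G D\<close>, and evaluating \<open>G 0\<close> and \<open>G D\<close> in closed form gives the
  stated privacy level.\<close>

definition laplace_mixture_profile :: "real \<Rightarrow> real \<Rightarrow> real \<Rightarrow> real" where
  "laplace_mixture_profile a b t = (LINT l|lborel. l * exp (- l * t) * indicator {a..b} l)"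

lemma integrable_laplace_mixture_profile:
  "integrable lborel (\<lambda>l::real. l * exp (- l * t) * indicator {a..b} l)"
  by (rule borel_integrable_atLeastAtMost[where f="\<lambda>l. l * exp (- l * t)"])
    (intro continuous_intros)

lemma measurable_laplace_mixture_profile [measurable]:
  "laplace_mixture_profile a b \<in> borel_measurable borel"
  unfolding laplace_mixture_profile_def[abs_def] by measurable

lemma laplace_mixture_profile_closed_form:
  assumes "a \<le> b" "0 < t"
  shows "laplace_mixture_profile a b t
           = ((1 + a * t) * exp (- (a * t)) - (1 + b * t) * exp (- (b * t))) / t\<^sup>2"
proof -
  let ?F = "\<lambda>x. - ((1 + x * t) * exp (- (x * t))) / t\<^sup>2"
  have "(LINT x|lborel. indicator {a..b} x *\<^sub>R (x * exp (- x * t))) = ?F b - ?F a"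
  proof (rule integral_FTC_atLeastAtMost[OF \<open>a \<le> b\<close>])
    fix x
    have "(?F has_real_derivative x * exp (- x * t)) (at x)"
      using \<open>0 < t\<close> by (auto intro!: derivative_eq_intros simp: field_simps power2_eq_square)
    then show "(?F has_vector_derivative x * exp (- x * t)) (at x within {a..b})"
      by (simp add: has_real_derivative_iff_has_vector_derivative has_vector_derivative_at_within)
  qed (intro continuous_intros)
  then show ?thesis
    unfolding laplace_mixture_profile_def by (simp add: mult.commute diff_divide_distrib)
qed

lemma laplace_mixture_profile_0:
  assumes "a \<le> b"
  shows "laplace_mixture_profile a b 0 = (b\<^sup>2 - a\<^sup>2) / 2"
proof -
  have "(LINT x|lborel. indicator {a..b} x *\<^sub>R x) = b\<^sup>2 / 2 - a\<^sup>2 / 2"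
  proof (rule integral_FTC_atLeastAtMost[OF assms])
    fix x
    have "((\<lambda>x::real. x\<^sup>2 / 2) has_real_derivative x) (at x)"
      by (auto intro!: derivative_eq_intros)
    then show "((\<lambda>x. x\<^sup>2 / 2) has_vector_derivative x) (at x within {a..b})"
      by (simp add: has_real_derivative_iff_has_vector_derivative has_vector_derivative_at_within)
  qed (intro continuous_intros)
  then show ?thesis
    unfolding laplace_mixture_profile_def by (simp add: mult.commute diff_divide_distrib)
qed

lemma laplace_mixture_profile_antimono:
  assumes "0 \<le> a" "s \<le> t"
  shows "laplace_mixture_profile a b t \<le> laplace_mixture_profile a b s"
  unfolding laplace_mixture_profile_def
proof (rule integral_mono[OF integrable_laplace_mixture_profile integrable_laplace_mixture_profile])
  fix l :: real
  show "l * exp (- l * t) * indicator {a..b} l \<le> l * exp (- l * s) * indicator {a..b} l"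
    using assms by (auto intro!: mult_left_mono split: split_indicator)
qed

lemma laplace_mixture_profile_pos:
  assumes "0 \<le> a" "a < b" "0 \<le> t"
  shows "0 < laplace_mixture_profile a b t"
proof -
  have "a\<^sup>2 < b\<^sup>2"
    using assms by (intro power_strict_mono) auto
  then have "0 < exp (- b * t) * laplace_mixture_profile a b 0"
    using assms laplace_mixture_profile_0[of a b] by simp
  also have "\<dots> = (LINT l|lborel. exp (- b * t) * (l * exp (- l * 0) * indicator {a..b} l))"
    unfolding laplace_mixture_profile_def by simp
  also have "\<dots> \<le> laplace_mixture_profile a b t"
    unfolding laplace_mixture_profile_def
  proof (rule integral_mono)
    fix l :: real
    show "exp (- b * t) * (l * exp (- l * 0) * indicator {a..b} l)
            \<le> l * exp (- l * t) * indicator {a..b} l"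
      using assms by (auto intro!: mult_left_mono mult_right_mono simp: mult.commute split: split_indicator)
  qed (rule integrable_mult_right integrable_laplace_mixture_profile,
       rule integrable_laplace_mixture_profile, rule integrable_laplace_mixture_profile)
  finally show ?thesis .
qed

lemma exp_diff_mult_exp_diff_nonneg:
  fixes l m s t :: real
  assumes "0 \<le> s" "0 \<le> t"
  shows "0 \<le> (exp (- l * s) - exp (- m * s)) * (exp (- l * t) - exp (- m * t))"
proof (cases "l \<le> m")
  case True
  then show ?thesis
    using assms by (intro mult_nonneg_nonneg) (auto intro: mult_right_mono)
next
  case False
  then show ?thesis
    using assms by (intro mult_nonpos_nonpos) (auto intro: mult_right_mono)
qed

lemma laplace_mixture_profile_shift_le:
  assumes "0 \<le> a" "a < b" "0 \<le> t" "0 < D"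
  shows "laplace_mixture_profile a b D * laplace_mixture_profile a b t
           \<le> laplace_mixture_profile a b 0 * laplace_mixture_profile a b (t + D)"
proof -
  let ?G = "laplace_mixture_profile a b"
  let ?g = "\<lambda>s l. l * exp (- l * s) * indicator {a..b} l"
  have G0: "0 < ?G 0" and GD: "0 < ?G D"
    using assms by (auto intro: laplace_mixture_profile_pos)
  \<comment> \<open>the threshold \<open>m\<close> at which \<open>\<lambda> \<mapsto> e\<^sup>-\<^sup>\<lambda>\<^sup>D\<close> crosses its weighted mean \<open>G D / G 0\<close>\<close>
  define m where "m = - ln (?G D / ?G 0) / D"
  define c where "c = exp (- m * D)"
  define E where "E = exp (- m * t)"
  have c: "c = ?G D / ?G 0"
    using G0 GD \<open>0 < D\<close> by (simp add: c_def m_def)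
  have "0 \<le> (LINT l|lborel. ?g (t + D) l - c * ?g t l - E * ?g D l + E * c * ?g 0 l)"
  proof (rule integral_nonneg_AE, rule AE_I2)
    fix l :: real
    have "0 \<le> indicator {a..b} l * l * ((exp (- l * t) - E) * (exp (- l * D) - c))"
      using assms exp_diff_mult_exp_diff_nonneg[of t D l m] unfolding c_def E_def
      by (auto split: split_indicator)
    also have "\<dots> = ?g (t + D) l - c * ?g t l - E * ?g D l + E * c * ?g 0 l"
      by (simp add: algebra_simps exp_add[symmetric])
    finally show "0 \<le> ?g (t + D) l - c * ?g t l - E * ?g D l + E * c * ?g 0 l" .
  qed
  also have "\<dots> = ?G (t + D) - c * ?G t - E * ?G D + E * c * ?G 0"
    unfolding laplace_mixture_profile_def
    by (intro has_bochner_integral_integral_eq has_bochner_integral_add has_bochner_integral_diff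
        has_bochner_integral_mult_right has_bochner_integral_integrable
        integrable_laplace_mixture_profile)
  also have "\<dots> = ?G (t + D) - ?G D / ?G 0 * ?G t"
    using G0 by (simp add: c)
  finally show ?thesis
    using G0 by (simp add: field_simps)
qed

lemma laplace_mixture_profile_ratio_le:
  assumes "0 \<le> a" "a < b" "0 < D" "0 \<le> s" "t \<le> s + D"
  shows "laplace_mixture_profile a b D * laplace_mixture_profile a b s
           \<le> laplace_mixture_profile a b 0 * laplace_mixture_profile a b t"
proof -
  have "laplace_mixture_profile a b D * laplace_mixture_profile a b s
          \<le> laplace_mixture_profile a b 0 * laplace_mixture_profile a b (s + D)"
    using assms by (intro laplace_mixture_profile_shift_le) auto
  also have "\<dots> \<le> laplace_mixture_profile a b 0 * laplace_mixture_profile a b t"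
    using assms laplace_mixture_profile_pos[of a b 0]
    by (intro mult_left_mono laplace_mixture_profile_antimono) auto
  finally show ?thesis .
qed

lemma measurable_laplace_density [measurable]:
  "(\<lambda>(l, y). laplace_density l (y - c)) \<in> borel_measurable (borel \<Otimes>\<^sub>M borel)"
  unfolding laplace_density_def by measurable

lemma measurable_laplace_density_shift [measurable]:
  "(\<lambda>y. laplace_density l (y - c)) \<in> borel_measurable borel"
  unfolding laplace_density_def by measurable

lemma laplace_density_le_exponential_density:
  assumes "0 < l"
  shows "laplace_density l w \<le> (exponential_density l w + exponential_density l (- w)) / 2"
  using assms unfolding laplace_density_def exponential_density_def
  by (auto simp: abs_if mult.commute)

lemma nn_integral_exponential_density_affine:
  assumes "0 < l" "\<bar>u\<bar> = 1"
  shows "(\<integral>\<^sup>+ y. ennreal (exponential_density l (u * (y - c))) \<partial>lborel) = 1"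
proof -
  interpret prob_space "density lborel (exponential_density l)"
    using prob_space_exponential_density[OF assms(1)] .
  have "(\<integral>\<^sup>+ y. ennreal (exponential_density l y) \<partial>lborel) = 1"
    using emeasure_space_1 by (simp add: emeasure_density)
  then show ?thesis
    using nn_integral_real_affine[of "\<lambda>y. ennreal (exponential_density l y)" u "- u * c"] assms(2)
    by (auto simp: right_diff_distrib)
qed

lemma nn_integral_laplace_density_le_1:
  "(\<integral>\<^sup>+ y. ennreal (laplace_density l (y - c)) \<partial>lborel) \<le> 1"
proof (cases "0 < l")
  case False
  then have "\<And>y. ennreal (laplace_density l (y - c)) = 0"
    unfolding laplace_density_def by (simp add: ennreal_eq_0_iff mult_nonpos_nonneg)
  then show ?thesis by simp
next
  case True
  let ?e = "\<lambda>y. ennreal (exponential_density l y)"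
  have "(\<integral>\<^sup>+ y. ennreal (laplace_density l (y - c)) \<partial>lborel)
          \<le> (\<integral>\<^sup>+ y. (?e (y - c) + ?e (c - y)) / 2 \<partial>lborel)"
  proof (rule nn_integral_mono)
    fix y
    have "ennreal (laplace_density l (y - c))
            \<le> ennreal ((exponential_density l (y - c) + exponential_density l (- (y - c))) / 2)"
      using laplace_density_le_exponential_density[OF True] by (rule ennreal_leI)
    also have "\<dots> = (?e (y - c) + ?e (c - y)) / 2"
      using exponential_density_nonneg[OF True]
      by (simp add: divide_ennreal[symmetric] ennreal_plus)
    finally show "ennreal (laplace_density l (y - c)) \<le> (?e (y - c) + ?e (c - y)) / 2" .
  qed
  also have "\<dots> = (1 + 1) / 2"
    using nn_integral_exponential_density_affine[OF True, of 1 c]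
      nn_integral_exponential_density_affine[OF True, of "- 1" c]
    by (simp add: nn_integral_divide nn_integral_add)
  also have "\<dots> = 1"
    by (simp add: ennreal_divide_self)
  finally show ?thesis .
qed

lemma measurable_laplace_kernel:
  "(\<lambda>l. density lborel (\<lambda>y. ennreal (laplace_density l (y - c))))
     \<in> measurable borel (subprob_algebra lborel)"
proof (rule measurable_subprob_algebra)
  fix l :: real
  show "subprob_space (density lborel (\<lambda>y. ennreal (laplace_density l (y - c))))"
    using nn_integral_laplace_density_le_1[of l c] by (intro subprob_spaceI) (auto simp: emeasure_density)
next
  fix A :: "real set"
  assume A [measurable]: "A \<in> sets lborel"
  have "(\<lambda>l. \<integral>\<^sup>+ y. ennreal (laplace_density l (y - c)) * indicator A y \<partial>lborel) \<in> borel_measurable borel"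
    by (rule lborel.borel_measurable_nn_integral) measurable
  then show "(\<lambda>l. emeasure (density lborel (\<lambda>y. ennreal (laplace_density l (y - c)))) A)
               \<in> borel_measurable borel"
    using A by (simp add: emeasure_density)
qed simp

lemma measurable_laplace_kernel_uniform:
  "(\<lambda>l. density lborel (\<lambda>y. ennreal (laplace_density l (y - c))))
     \<in> measurable (uniform_measure lborel {a..b}) (subprob_algebra lborel)"
  using measurable_laplace_kernel
  by (subst measurable_cong_sets[where M'=borel and N'="subprob_algebra lborel"]) auto

lemma subprob_space_rdp_laplace_uniform:
  assumes "a < b"
  shows "subprob_space (rdp_laplace (uniform_measure lborel {a..b}) q d)"
proof -
  have "prob_space (uniform_measure lborel {a..b})"
    using assms by (intro prob_space_uniform_measure) auto
  then show ?thesis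
    unfolding rdp_laplace_def
    by (intro subprob_space_bind[OF _ measurable_laplace_kernel_uniform])
      (simp add: prob_space_imp_subprob_space)
qed

lemma nn_integral_laplace_density_uniform:
  assumes "0 \<le> a"
  shows "(\<integral>\<^sup>+ l. ennreal (laplace_density l w) * indicator {a..b} l \<partial>lborel)
           = ennreal (laplace_mixture_profile a b \<bar>w\<bar> / 2)"
proof -
  have "(\<integral>\<^sup>+ l. ennreal (laplace_density l w) * indicator {a..b} l \<partial>lborel)
          = (\<integral>\<^sup>+ l. ennreal (1 / 2 * (l * exp (- l * \<bar>w\<bar>) * indicator {a..b} l)) \<partial>lborel)"
    by (intro nn_integral_cong) (auto simp: laplace_density_def split: split_indicator)
  also have "\<dots> = ennreal (LINT l|lborel. 1 / 2 * (l * exp (- l * \<bar>w\<bar>) * indicator {a..b} l))"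
    using assms
    by (intro nn_integral_eq_integral integrable_mult_right integrable_laplace_mixture_profile AE_I2)
      (auto split: split_indicator)
  finally show ?thesis
    unfolding laplace_mixture_profile_def by simp
qed

lemma emeasure_rdp_laplace_uniform:
  assumes "0 \<le> a" "a < b" and S [measurable]: "S \<in> sets borel"
  shows "emeasure (rdp_laplace (uniform_measure lborel {a..b}) q d) S
           = (\<integral>\<^sup>+ y. ennreal (laplace_mixture_profile a b \<bar>y - q d\<bar> / 2) * indicator S y \<partial>lborel)
             / ennreal (b - a)"
proof -
  let ?U = "uniform_measure lborel {a..b}"
  let ?p = "\<lambda>l y. ennreal (laplace_density l (y - q d))"
  have "emeasure (rdp_laplace ?U q d) S = (\<integral>\<^sup>+ l. emeasure (density lborel (?p l)) S \<partial>?U)"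
    unfolding rdp_laplace_def using measurable_laplace_kernel_uniform S
    by (intro emeasure_bind) auto
  also have "\<dots> = (\<integral>\<^sup>+ l. (\<integral>\<^sup>+ y. ?p l y * indicator S y \<partial>lborel) * indicator {a..b} l \<partial>lborel)
                  / emeasure lborel {a..b}"
    by (simp add: emeasure_density, rule nn_integral_uniform_measure)
      (auto simp: laplace_density_def)
  also have "(\<integral>\<^sup>+ l. (\<integral>\<^sup>+ y. ?p l y * indicator S y \<partial>lborel) * indicator {a..b} l \<partial>lborel)
               = (\<integral>\<^sup>+ l. (\<integral>\<^sup>+ y. ?p l y * indicator S y * indicator {a..b} l \<partial>lborel) \<partial>lborel)"
    by (subst nn_integral_multc) (auto simp: laplace_density_def)
  also have "\<dots> = (\<integral>\<^sup>+ y. (\<integral>\<^sup>+ l. ?p l y * indicator S y * indicator {a..b} l \<partial>lborel) \<partial>lborel)"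
    by (rule lborel_pair.Fubini'[symmetric]) (auto simp: laplace_density_def)
  also have "\<dots> = (\<integral>\<^sup>+ y. (\<integral>\<^sup>+ l. ?p l y * indicator {a..b} l \<partial>lborel) * indicator S y \<partial>lborel)"
    by (intro nn_integral_cong, subst nn_integral_multc[symmetric])
      (auto simp: laplace_density_def mult_ac)
  also have "\<dots> = (\<integral>\<^sup>+ y. ennreal (laplace_mixture_profile a b \<bar>y - q d\<bar> / 2) * indicator S y \<partial>lborel)"
    using \<open>0 \<le> a\<close> by (simp add: nn_integral_laplace_density_uniform)
  finally show ?thesis
    using \<open>a < b\<close> by simp
qed

lemma emeasure_rdp_laplace_uniform_le:
  assumes "0 \<le> a" "a < b" "0 < D" "\<bar>q d - q d'\<bar> \<le> D" and S [measurable]: "S \<in> sets borel"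
  shows "emeasure (rdp_laplace (uniform_measure lborel {a..b}) q d) S
           \<le> ennreal (laplace_mixture_profile a b 0 / laplace_mixture_profile a b D)
             * emeasure (rdp_laplace (uniform_measure lborel {a..b}) q d') S"
proof -
  let ?G = "laplace_mixture_profile a b"
  let ?C = "?G 0 / ?G D"
  have GD: "0 < ?G D" and G0: "0 < ?G 0"
    using assms by (auto intro: laplace_mixture_profile_pos)
  have density_le: "ennreal (?G \<bar>y - q d\<bar> / 2) \<le> ennreal ?C * ennreal (?G \<bar>y - q d'\<bar> / 2)" for y
  proof -
    have "?G D * ?G \<bar>y - q d\<bar> \<le> ?G 0 * ?G \<bar>y - q d'\<bar>"
      using assms by (intro laplace_mixture_profile_ratio_le) auto
    then have "?G \<bar>y - q d\<bar> / 2 \<le> ?C * (?G \<bar>y - q d'\<bar> / 2)"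
      using GD by (simp add: field_simps)
    then have "ennreal (?G \<bar>y - q d\<bar> / 2) \<le> ennreal (?C * (?G \<bar>y - q d'\<bar> / 2))"
      by (rule ennreal_leI)
    also have "\<dots> = ennreal ?C * ennreal (?G \<bar>y - q d'\<bar> / 2)"
      using G0 GD laplace_mixture_profile_pos[of a b "\<bar>y - q d'\<bar>"] assms
      by (intro ennreal_mult) auto
    finally show ?thesis .
  qed
  have "(\<integral>\<^sup>+ y. ennreal (?G \<bar>y - q d\<bar> / 2) * indicator S y \<partial>lborel)
          \<le> (\<integral>\<^sup>+ y. ennreal ?C * (ennreal (?G \<bar>y - q d'\<bar> / 2) * indicator S y) \<partial>lborel)"
    using density_le by (intro nn_integral_mono) (auto simp: mult.assoc split: split_indicator)
  also have "\<dots> = ennreal ?C * (\<integral>\<^sup>+ y. ennreal (?G \<bar>y - q d'\<bar> / 2) * indicator S y \<partial>lborel)"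
    by (intro nn_integral_cmult) measurable
  finally show ?thesis
    using assms by (simp add: emeasure_rdp_laplace_uniform ennreal_times_divide divide_right_mono_ennreal)
qed

lemma laplace_mixture_profile_0_div_closed_form:
  assumes "0 \<le> a" "a < b" "0 < D"
  shows "laplace_mixture_profile a b 0 / laplace_mixture_profile a b D
           = ((a * D)\<^sup>2 - (b * D)\<^sup>2)
             / (2 * ((1 + b * D) * exp (- (b * D)) - (1 + a * D) * exp (- (a * D))))"
proof -
  have closed: "laplace_mixture_profile a b D
                  = ((1 + a * D) * exp (- (a * D)) - (1 + b * D) * exp (- (b * D))) / D\<^sup>2"
    using assms by (simp add: laplace_mixture_profile_closed_form)
  then have "(1 + a * D) * exp (- (a * D)) - (1 + b * D) * exp (- (b * D)) \<noteq> 0"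
    using laplace_mixture_profile_pos[of a b D] assms by auto
  then show ?thesis
    using assms unfolding closed laplace_mixture_profile_0[OF less_imp_le[OF \<open>a < b\<close>]]
    by (simp add: field_simps power2_eq_square)
qed

lemma abs_diff_le_sensitivity:
  assumes "sensitivity adj q < \<infinity>" "adj d d'"
  shows "\<bar>q d - q d'\<bar> \<le> real_of_ereal (sensitivity adj q)"
proof -
  have "ereal \<bar>q d - q d'\<bar> \<le> sensitivity adj q"
    unfolding sensitivity_def using assms(2) by (intro SUP_upper2[where i="(d, d')"]) auto
  with assms(1) show ?thesis
    by (cases "sensitivity adj q") auto
qed

lemma differentially_private_if_emeasure_le:
  assumes "0 < C"
    and finite: "\<And>d. subprob_space (M d)"
    and le: "\<And>d d' S. adj d d' \<Longrightarrow> S \<in> sets borel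
               \<Longrightarrow> emeasure (M d) S \<le> ennreal C * emeasure (M d') S"
  shows "differentially_private adj M (ln C)"
  unfolding differentially_private_def
proof (intro allI impI ballI)
  fix d d' S
  assume "adj d d'" "S \<in> sets (borel :: real measure)"
  then have "enn2real (emeasure (M d) S) \<le> enn2real (ennreal C * emeasure (M d') S)"
    using le subprob_space.emeasure_subprob_space_less_top[OF finite]
    by (intro enn2real_mono) (auto simp: ennreal_mult_less_top top.not_eq_extremum)
  then show "measure (M d) S \<le> exp (ln C) * measure (M d') S"
    using \<open>0 < C\<close> by (simp add: measure_def enn2real_mult)
qed

theorem mainTheorem11:
  fixes adj :: "'d \<Rightarrow> 'd \<Rightarrow> bool" and q :: "'d \<Rightarrow> real" and a b :: real
  assumes "symp adj"
    and "0 < sensitivity adj q" and "sensitivity adj q < \<infinity>"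
    and "0 \<le> a" and "a < b"
  defines "\<alpha> \<equiv> a * real_of_ereal (sensitivity adj q)"
    and "\<beta> \<equiv> b * real_of_ereal (sensitivity adj q)"
  shows "differentially_private adj (rdp_laplace (uniform_measure lborel {a..b}) q)
           (ln ((\<alpha>\<^sup>2 - \<beta>\<^sup>2) / (2 * ((1 + \<beta>) * exp (- \<beta>) - (1 + \<alpha>) * exp (- \<alpha>)))))"
proof -
  define D where "D = real_of_ereal (sensitivity adj q)"
  let ?G = "laplace_mixture_profile a b"
  have "0 < D"
    using assms(2,3) unfolding D_def by (cases "sensitivity adj q") auto
  then have "0 < ?G 0 / ?G D"
    using assms(4,5) by (auto intro!: divide_pos_pos laplace_mixture_profile_pos)
  moreover have "(\<alpha>\<^sup>2 - \<beta>\<^sup>2) / (2 * ((1 + \<beta>) * exp (- \<beta>) - (1 + \<alpha>) * exp (- \<alpha>))) = ?G 0 / ?G D"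
    unfolding \<alpha>_def \<beta>_def D_def[symmetric]
    using assms(4,5) \<open>0 < D\<close> by (simp add: laplace_mixture_profile_0_div_closed_form)
  ultimately show ?thesis
    using assms(3,4,5) \<open>0 < D\<close> abs_diff_le_sensitivity[of adj q, folded D_def]
    by (auto intro!: differentially_private_if_emeasure_le emeasure_rdp_laplace_uniform_le
        subprob_space_rdp_laplace_uniform)
qed

end
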